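(* Let $p$ be an odd prime, $n$ a positive integer with $\gcd(n,p)=1$, $\eta$ a root of an irreducible quadratic over $\mathbb{F}_p$, and let $\mathcal{C}(S)$ be a linear negacyclic quantum stabilizer code associated to a totally isotropic subspace $S\subseteq\mathbb{F}_p^n\times\mathbb{F}_p^n$ (so the image of $S^\perp$ in $\mathcal{R}(\eta)=\mathbb{F}_p(\eta)[X]/\langle X^n+1\rangle$ is an ideal). If the BCH distance of $\mathcal{C}(S)$ is $d$, then the minimum distance of $\mathcal{C}(S)$ is at least $d$.
   Context: $\mathbb{F}_p^n\times\mathbb{F}_p^n$ is identified with $\mathbb{F}_{p^2}^n=\mathbb{F}_p(\eta)^n$ by $(\mathbf{a},\mathbf{b})\mapsto\mathbf{a}+\eta\mathbf{b}$, and vectors with polynomials $\sum a_iX^i$ modulo $X^n+1$. The symplectic inner product is $\langle(\mathbf{a},\mathbf{b}),(\mathbf{c},\mathbf{d})\rangle_s=\mathbf{a}^T\mathbf{d}-\mathbf{b}^T\mathbf{c}$, $S^\perp$ is the symplectic dual. $\mathcal{C}(S)$ is linear if the image of $S$ is an $\mathbb{F}_{p^2}$-subspace, and negacyclic if $S$ is closed under $(\mathbf{a},\mathbf{b})\mapsto(N\mathbf{a},N\mathbf{b})$ with $N(u_0,\dots,u_{n-1})=(-u_{n-1},u_0,\dots,u_{n-2})$. The joint weight of $(\mathbf{a},\mathbf{b})$ is $\#\{j:(a_j,b_j)\neq(0,0)\}$; the minimum distance of $\mathcal{C}(S)$ is the minimum joint weight of elements of $S^\perp\setminus S$. For $q=p^k$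 and a factor $f$ of $X^n+1$ over $\mathbb{F}_q$, the BCH distance of $f$ is the largest integer $d$ such that $\beta^{\ell},\beta^{\ell+2},\dots,\beta^{\ell+2(d-2)}$ are roots of $f$ for some odd $\ell\in\{1,3,\dots,2n-1\}$ and some primitive $2n$-th root of unity $\beta$ (in an extension of $\mathbb{F}_q$). The BCH distance of the linear code $\mathcal{C}(S)$ is the BCH distance of the monic generator polynomial of the ideal $S^\perp$ of $\mathcal{R}(\eta)$. *)

theory Defs
  imports "HOL-Computational_Algebra.Polynomial"
begin

text \<open>We work inside an ambient field 'e of characteristic p.  The prime field
  F_p is its prime subfield, F_{p^2} = F_p(eta) is the set of elements a + eta*b
  with a, b in F_p.\<close>

definition Fp :: "'a::semiring_1 set" where
  "Fp = range of_nat"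

definition Fq :: "'a::field \<Rightarrow> 'a set" where
  "Fq eta = {a + eta * b | a b. a \<in> Fp \<and> b \<in> Fp}"

definition poly_over :: "'a::zero set \<Rightarrow> 'a poly \<Rightarrow> bool" where
  "poly_over K f \<longleftrightarrow> (\<forall>i. coeff f i \<in> K)"

definition irreducible_over :: "'a::field set \<Rightarrow> 'a poly \<Rightarrow> bool" where
  "irreducible_over K q \<longleftrightarrow> poly_over K q \<and> degree q \<ge> 1 \<and>
     (\<forall>a b. poly_over K a \<and> poly_over K b \<and> q = a * b \<longrightarrow> degree a = 0 \<or> degree b = 0)"

definition vecs :: "nat \<Rightarrow> (nat \<Rightarrow> 'a::field) set" where
  "vecs n = {a. (\<forall>i<n. a i \<in> Fp) \<and> (\<forall>i\<ge>n. a i = 0)}"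

definition symp :: "nat \<Rightarrow> (nat \<Rightarrow> 'a::field) \<times> (nat \<Rightarrow> 'a) \<Rightarrow> (nat \<Rightarrow> 'a) \<times> (nat \<Rightarrow> 'a) \<Rightarrow> 'a" where
  "symp n u v = (\<Sum>i<n. fst u i * snd v i) - (\<Sum>i<n. snd u i * fst v i)"

definition subspace_Fp :: "nat \<Rightarrow> ((nat \<Rightarrow> 'a::field) \<times> (nat \<Rightarrow> 'a)) set \<Rightarrow> bool" where
  "subspace_Fp n S \<longleftrightarrow> S \<subseteq> vecs n \<times> vecs n \<and> ((\<lambda>i. 0), (\<lambda>i. 0)) \<in> S \<and>
     (\<forall>u\<in>S. \<forall>v\<in>S. ((\<lambda>i. fst u i + fst v i), (\<lambda>i. snd u i + snd v i)) \<in> S) \<and>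
     (\<forall>c\<in>Fp. \<forall>u\<in>S. ((\<lambda>i. c * fst u i), (\<lambda>i. c * snd u i)) \<in> S)"

definition symp_dual :: "nat \<Rightarrow> ((nat \<Rightarrow> 'a::field) \<times> (nat \<Rightarrow> 'a)) set \<Rightarrow> ((nat \<Rightarrow> 'a) \<times> (nat \<Rightarrow> 'a)) set" where
  "symp_dual n S = {v \<in> vecs n \<times> vecs n. \<forall>u\<in>S. symp n v u = 0}"

definition totally_isotropic :: "nat \<Rightarrow> ((nat \<Rightarrow> 'a::field) \<times> (nat \<Rightarrow> 'a)) set \<Rightarrow> bool" where
  "totally_isotropic n S \<longleftrightarrow> S \<subseteq> symp_dual n S"

definition embed :: "'a::field \<Rightarrow> (nat \<Rightarrow> 'a) \<times> (nat \<Rightarrow> 'a) \<Rightarrow> nat \<Rightarrow> 'a" where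
  "embed eta u = (\<lambda>i. fst u i + eta * snd u i)"

definition is_linear_code :: "'a::field \<Rightarrow> ((nat \<Rightarrow> 'a) \<times> (nat \<Rightarrow> 'a)) set \<Rightarrow> bool" where
  "is_linear_code eta S \<longleftrightarrow>
     (\<lambda>i. 0) \<in> embed eta ` S \<and>
     (\<forall>x\<in>embed eta ` S. \<forall>y\<in>embed eta ` S. (\<lambda>i. x i + y i) \<in> embed eta ` S) \<and>
     (\<forall>c\<in>Fq eta. \<forall>x\<in>embed eta ` S. (\<lambda>i. c * x i) \<in> embed eta ` S)"

definition negashift :: "nat \<Rightarrow> (nat \<Rightarrow> 'a::ring) \<Rightarrow> nat \<Rightarrow> 'a" where
  "negashift n u = (\<lambda>i. if i = 0 then - u (n - 1) else if i < n then u (i - 1) else 0)"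

definition is_negacyclic :: "nat \<Rightarrow> ((nat \<Rightarrow> 'a::ring) \<times> (nat \<Rightarrow> 'a)) set \<Rightarrow> bool" where
  "is_negacyclic n S \<longleftrightarrow> (\<forall>u\<in>S. (negashift n (fst u), negashift n (snd u)) \<in> S)"

definition vpoly :: "nat \<Rightarrow> (nat \<Rightarrow> 'a::comm_monoid_add) \<Rightarrow> 'a poly" where
  "vpoly n w = (\<Sum>i<n. monom (w i) i)"

text \<open>Image of S^perp in R(eta), with elements represented by their reduced
  polynomials (degree < n).\<close>
definition dual_polys :: "'a::field \<Rightarrow> nat \<Rightarrow> ((nat \<Rightarrow> 'a) \<times> (nat \<Rightarrow> 'a)) set \<Rightarrow> 'a poly set" where
  "dual_polys eta n S = vpoly n ` embed eta ` symp_dual n S"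

definition is_generator_poly :: "'a::field \<Rightarrow> nat \<Rightarrow> 'a poly set \<Rightarrow> 'a poly \<Rightarrow> bool" where
  "is_generator_poly eta n I g \<longleftrightarrow> lead_coeff g = 1 \<and> poly_over (Fq eta) g \<and>
     g dvd (monom 1 n + 1) \<and>
     I = {h. poly_over (Fq eta) h \<and> degree h < n \<and> g dvd h}"

definition primitive_root_of_unity :: "nat \<Rightarrow> 'a::field \<Rightarrow> bool" where
  "primitive_root_of_unity m b \<longleftrightarrow> b ^ m = 1 \<and> (\<forall>k. 0 < k \<and> k < m \<longrightarrow> b ^ k \<noteq> 1)"

definition bch_ok :: "nat \<Rightarrow> 'a::field poly \<Rightarrow> nat \<Rightarrow> bool" where
  "bch_ok n f d \<longleftrightarrow> (\<exists>l b. odd l \<and> 1 \<le> l \<and> l \<le> 2 * n - 1 \<and> primitive_root_of_unity (2 * n) b \<and>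
       (\<forall>j. j + 1 < d \<longrightarrow> poly f (b ^ (l + 2 * j)) = 0))"

definition is_bch_distance :: "nat \<Rightarrow> 'a::field poly \<Rightarrow> nat \<Rightarrow> bool" where
  "is_bch_distance n f d \<longleftrightarrow> bch_ok n f d \<and> (\<forall>d'. bch_ok n f d' \<longrightarrow> d' \<le> d)"

definition joint_weight :: "nat \<Rightarrow> (nat \<Rightarrow> 'a::zero) \<times> (nat \<Rightarrow> 'a) \<Rightarrow> nat" where
  "joint_weight n u = card {j. j < n \<and> (fst u j \<noteq> 0 \<or> snd u j \<noteq> 0)}"

end

theory Submission imports Defs begin

text \<open>Let \<open>w = embed eta u\<close> for a dual vector \<open>u\<close>; its polynomial is a multiple
  of \<open>g\<close>, hence vanishes at \<open>\<beta>\<^sup>l (\<beta>\<^sup>2)\<^sup>j\<close> for \<open>j < d - 1\<close>. If \<open>w\<close> had fewer than \<open>d\<close> nonzero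
  entries, these equations would form a square Vandermonde system in the nonzero entries with the
  distinct nodes \<open>\<beta>\<^sup>2\<^sup>i\<close>, forcing \<open>w = 0\<close>. Since \<open>1, \<eta>\<close> are linearly independent over \<open>F\<^sub>p\<close>, that
  would give \<open>u = 0 \<in> S\<close>.\<close>

lemma power_sums_eq_0_imp_eq_0:
  fixes y z :: "'i \<Rightarrow> 'e::field"
  assumes fin: "finite K" and inj: "inj_on z K"
    and sums: "\<And>j. j < card K \<Longrightarrow> (\<Sum>i\<in>K. y i * z i ^ j) = 0" and i0: "i0 \<in> K"
  shows "y i0 = 0"
proof -
  define q where "q = (\<Prod>i\<in>K-{i0}. [:- z i, 1:])"
  have "degree q \<le> (\<Sum>i\<in>K-{i0}. degree [:- z i, 1:])"
    unfolding q_def using degree_prod_sum_le[of "K-{i0}" "\<lambda>i. [:- z i, 1:]"] fin by (simp add: o_def)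
  also have "\<dots> = card (K - {i0})" by simp
  also have "\<dots> < card K" using fin i0 by (rule card_Diff1_less)
  finally have deg_q: "degree q < card K" .
  have poly_q: "poly q x = (\<Prod>i\<in>K-{i0}. x - z i)" for x
    unfolding q_def by (simp add: poly_prod)
  have "(\<Sum>i\<in>K. y i * poly q (z i)) = (\<Sum>k\<le>degree q. coeff q k * (\<Sum>i\<in>K. y i * z i ^ k))"
    by (simp add: poly_altdef sum_distrib_left sum.swap[of _ K] mult_ac)
  also have "\<dots> = 0" using sums deg_q by (auto intro!: sum.neutral)
  finally have "(\<Sum>i\<in>K. y i * poly q (z i)) = 0" .
  moreover have "poly q (z i) = 0" if "i \<in> K - {i0}" for i
    unfolding poly_q using fin that by (intro prod_zero) auto
  then have "(\<Sum>i\<in>K. y i * poly q (z i)) = y i0 * poly q (z i0)"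
    using fin i0 by (subst sum.remove) (auto intro!: sum.neutral)
  moreover have "poly q (z i0) \<noteq> 0"
    unfolding poly_q using fin inj i0 by (auto simp: inj_on_def)
  ultimately show ?thesis by simp
qed

lemma poly_vpoly: "poly (vpoly n w) (x::'a::comm_semiring_1) = (\<Sum>i<n. w i * x ^ i)"
  by (simp add: vpoly_def poly_sum poly_monom)

lemma bch_bound:
  fixes a c :: "'e::field"
  assumes inj: "inj_on (\<lambda>i. c ^ i) {..<n}" and "a \<noteq> 0"
    and roots: "\<And>j. j + 1 < d \<Longrightarrow> poly (vpoly n w) (a * c ^ j) = 0"
    and nonzero: "i0 < n" "w i0 \<noteq> 0"
  shows "d \<le> card {i. i < n \<and> w i \<noteq> 0}"
proof (rule ccontr)
  define K where "K = {i. i < n \<and> w i \<noteq> 0}"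
  assume "\<not> d \<le> card {i. i < n \<and> w i \<noteq> 0}"
  then have small: "card K < d" unfolding K_def by simp
  have sums: "(\<Sum>i\<in>K. (w i * a ^ i) * (c ^ i) ^ j) = 0" if "j < card K" for j
  proof -
    have "(w i * a ^ i) * (c ^ i) ^ j = w i * (a * c ^ j) ^ i" for i
      by (simp add: power_mult_distrib mult.commute flip: power_mult)
    then have "(\<Sum>i\<in>K. (w i * a ^ i) * (c ^ i) ^ j) = (\<Sum>i<n. w i * (a * c ^ j) ^ i)"
      by (intro sum.mono_neutral_cong_left) (auto simp: K_def)
    also have "\<dots> = 0" using roots[of j] that small by (simp add: poly_vpoly)
    finally show ?thesis .
  qed
  have "inj_on (\<lambda>i. c ^ i) K" using inj by (rule inj_on_subset) (auto simp: K_def)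
  then have "w i0 * a ^ i0 = 0"
    using power_sums_eq_0_imp_eq_0[OF _ _ sums] nonzero by (simp add: K_def)
  then show False using nonzero \<open>a \<noteq> 0\<close> by simp
qed

lemma primitive_root_of_unity_nonzero:
  "primitive_root_of_unity m b \<Longrightarrow> 0 < m \<Longrightarrow> b \<noteq> (0::'a::field)"
  by (auto simp: primitive_root_of_unity_def power_0_left)

lemma primitive_root_of_unity_square_inj:
  fixes b :: "'e::field"
  assumes prim: "primitive_root_of_unity (2 * n) b"
  shows "inj_on (\<lambda>i. (b ^ 2) ^ i) {..<n}"
proof -
  have "b ^ (2 * i) \<noteq> b ^ (2 * i')" if "i < i'" "i' < n" for i i'
  proof
    assume eq: "b ^ (2 * i) = b ^ (2 * i')"
    have "2 * i' = 2 * i + 2 * (i' - i)" using that by simp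
    then have "b ^ (2 * i') = b ^ (2 * i) * b ^ (2 * (i' - i))" by (metis power_add)
    then have "b ^ (2 * (i' - i)) = 1"
      using eq primitive_root_of_unity_nonzero[OF prim] that by simp
    moreover have "0 < 2 * (i' - i)" "2 * (i' - i) < 2 * n" using that by auto
    ultimately show False using prim unfolding primitive_root_of_unity_def by blast
  qed
  then show ?thesis
    by (intro inj_onI) (metis lessThan_iff linorder_neqE_nat power_mult)
qed

lemma Fp_0: "0 \<in> Fp" and Fp_1: "1 \<in> Fp"
  unfolding Fp_def by (metis of_nat_0 rangeI, metis of_nat_1 rangeI)

lemma Fp_add: "a \<in> Fp \<Longrightarrow> b \<in> Fp \<Longrightarrow> a + b \<in> Fp"
  unfolding Fp_def by (auto intro: range_eqI[of _ _ "_ + _"] simp del: of_nat_add simp: of_nat_add[symmetric])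

lemma Fp_mult: "a \<in> Fp \<Longrightarrow> b \<in> Fp \<Longrightarrow> a * b \<in> Fp"
  unfolding Fp_def by (auto intro: range_eqI[of _ _ "_ * _"] simp del: of_nat_mult simp: of_nat_mult[symmetric])

context
  fixes p :: nat
  assumes p_pos: "p > 0" and char_p: "of_nat p = (0::'e::field)"
begin

lemma Fp_uminus: "(a::'e) \<in> Fp \<Longrightarrow> - a \<in> Fp"
proof -
  assume "a \<in> Fp"
  then obtain k where a: "a = of_nat k" unfolding Fp_def by auto
  have "a + of_nat ((p - 1) * k) = of_nat (p * k)"
    using p_pos unfolding a of_nat_add[symmetric] by (cases p) auto
  also have "\<dots> = 0" using char_p by simp
  finally have "- a = of_nat ((p - 1) * k)" by (simp only: neg_eq_iff_add_eq_0)
  then show ?thesis unfolding Fp_def by (metis rangeI)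
qed

lemma finite_Fp: "finite (Fp :: 'e set)"
proof (rule finite_subset)
  show "Fp \<subseteq> (of_nat ` {..<p} :: 'e set)"
  proof
    fix x :: 'e assume "x \<in> Fp"
    then obtain k where x: "x = of_nat k" unfolding Fp_def by auto
    have "x = of_nat (p * (k div p) + k mod p)" unfolding x by simp
    also have "\<dots> = of_nat (k mod p)" by (simp only: of_nat_add of_nat_mult char_p) simp
    finally show "x \<in> of_nat ` {..<p}" using p_pos by auto
  qed
qed simp

lemma Fp_inverse: assumes "(b::'e) \<in> Fp" "b \<noteq> 0" shows "\<exists>c\<in>Fp. b * c = 1"
proof -
  have "(\<lambda>x. b * x) ` Fp = Fp"
    by (rule endo_inj_surj[OF finite_Fp]) (use assms Fp_mult in \<open>auto simp: inj_on_def\<close>)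
  then show ?thesis using Fp_1 by (metis imageE)
qed

lemma irreducible_quadratic_no_root_in_Fp:
  fixes x :: 'e
  assumes "c1 \<in> Fp" and irr: "irreducible_over Fp [:c0, c1, 1:]"
    and root: "poly [:c0, c1, 1:] x = 0" and "x \<in> Fp"
  shows False
proof -
  have "c0 = - (x * (c1 + x))" using root by (simp add: eq_neg_iff_add_eq_0)
  then have factor: "[:c0, c1, 1:] = [:- x, 1:] * [:c1 + x, 1:]"
    by (simp add: algebra_simps)
  have linear: "poly_over Fp [:y, 1:]" if "y \<in> Fp" for y :: 'e
    using that unfolding poly_over_def by (auto simp: coeff_pCons Fp_0 Fp_1 split: nat.split)
  have "poly_over Fp [:- x, 1:]" "poly_over Fp [:c1 + x, 1:]"
    using assms by (auto intro!: linear Fp_uminus Fp_add)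
  with irr factor show False unfolding irreducible_over_def by fastforce
qed

lemma Fp_combination_eq_0:
  fixes eta :: 'e
  assumes "c1 \<in> Fp" and "irreducible_over Fp [:c0, c1, 1:]" and "poly [:c0, c1, 1:] eta = 0"
    and a: "a \<in> Fp" and b: "b \<in> Fp" and comb: "a + eta * b = 0"
  shows "a = 0 \<and> b = 0"
proof (cases "b = 0")
  case True then show ?thesis using comb by simp
next
  case False
  then obtain c where c: "c \<in> Fp" "b * c = 1" using Fp_inverse[OF b] by auto
  have "a * c + eta * (b * c) = 0" using comb by (metis distrib_right mult.assoc mult_zero_left)
  then have "eta = - (a * c)" using c(2) by (simp add: eq_neg_iff_add_eq_0 add.commute)
  then have "eta \<in> Fp" using Fp_uminus Fp_mult[OF a c(1)] by simp
  then show ?thesis using irreducible_quadratic_no_root_in_Fp assms by blast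
qed

lemma embed_eq_0_imp_eq_0:
  fixes eta :: 'e
  assumes "c1 \<in> Fp" and "irreducible_over Fp [:c0, c1, 1:]" and "poly [:c0, c1, 1:] eta = 0"
    and u: "u \<in> vecs n \<times> vecs n" and zero: "\<And>i. i < n \<Longrightarrow> embed eta u i = 0"
  shows "u = ((\<lambda>i. 0), (\<lambda>i. 0))"
proof -
  have "fst u i = 0 \<and> snd u i = 0" for i
  proof (cases "i < n")
    case True
    then show ?thesis
      using Fp_combination_eq_0[OF assms(1-3)] u zero[OF True] unfolding vecs_def embed_def by auto
  next
    case False
    then show ?thesis using u unfolding vecs_def by auto
  qed
  then show ?thesis by (simp add: prod_eq_iff fun_eq_iff)
qed

end

lemma card_support_embed_le_joint_weight:
  "card {i. i < n \<and> embed eta u i \<noteq> 0} \<le> joint_weight n u"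
  unfolding joint_weight_def embed_def by (rule card_mono) auto

theorem mainTheorem12:
  fixes p n d :: nat and eta :: "'e::field"
    and S :: "((nat \<Rightarrow> 'e) \<times> (nat \<Rightarrow> 'e)) set" and g :: "'e poly"
  assumes "prime p" and "odd p" and "n > 0" and "coprime n p"
    and "of_nat p = (0::'e)"
    and "\<exists>c0 c1. c0 \<in> Fp \<and> c1 \<in> Fp \<and> irreducible_over Fp [:c0, c1, 1:] \<and> poly [:c0, c1, 1:] eta = 0"
    and "\<exists>b::'e. primitive_root_of_unity (2 * n) b"
    and "subspace_Fp n S" and "totally_isotropic n S"
    and "is_linear_code eta S" and "is_negacyclic n S"
    and "is_generator_poly eta n (dual_polys eta n S) g"
    and "is_bch_distance n g d"
  shows "\<forall>u \<in> symp_dual n S - S. d \<le> joint_weight n u"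
proof
  fix u assume u: "u \<in> symp_dual n S - S"
  obtain c0 c1 where eta: "c1 \<in> Fp" "irreducible_over Fp [:c0, c1, 1:]" "poly [:c0, c1, 1:] eta = 0"
    using assms(6) by blast
  obtain l b where b: "primitive_root_of_unity (2 * n) b"
    and g_roots: "\<And>j. j + 1 < d \<Longrightarrow> poly g (b ^ (l + 2 * j)) = 0"
    using assms(13) unfolding is_bch_distance_def bch_ok_def by blast
  have "g dvd vpoly n (embed eta u)"
    using u assms(12) unfolding is_generator_poly_def dual_polys_def by blast
  then obtain k where k: "vpoly n (embed eta u) = g * k" ..
  have roots: "poly (vpoly n (embed eta u)) (b ^ l * (b ^ 2) ^ j) = 0" if "j + 1 < d" for j
    using g_roots[OF that] by (simp add: k power_add power_mult)
  have "u \<noteq> ((\<lambda>i. 0), (\<lambda>i. 0))" using u assms(8) unfolding subspace_Fp_def by auto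
  moreover have "u \<in> vecs n \<times> vecs n" using u unfolding symp_dual_def by auto
  ultimately obtain i0 where "i0 < n" "embed eta u i0 \<noteq> 0"
    using embed_eq_0_imp_eq_0[OF prime_gt_0_nat[OF assms(1)] assms(5) eta] by blast
  then have "d \<le> card {i. i < n \<and> embed eta u i \<noteq> 0}"
    using bch_bound[OF primitive_root_of_unity_square_inj[OF b] _ roots]
      primitive_root_of_unity_nonzero[OF b] assms(3) by simp
  then show "d \<le> joint_weight n u"
    using card_support_embed_le_joint_weight le_trans by blast
qed

end
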